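(* Let a trader with concave, increasing utility $U_S$ hold $\Delta>0$ units of a yield token with outstanding random yield payments $Y_1,\dots,Y_n$ (paid in order before maturity). A menu of prices $(p_1,\dots,p_n)$ offers the trader the choice of selling all $\Delta$ tokens just before payment $Y_t$ at price $p_t$ ($t\in\{1,\dots,n\}$), giving expected utility $\tilde U^t_S=\mathbb{E}[U_S((\sum_{i=1}^{t-1}Y_i+p_t)\Delta)]$, or never selling, giving $\tilde U^{n+1}_S=\mathbb{E}[U_S((\sum_{i=1}^nY_i)\Delta)]$. Define $$p_n^*(\Delta)=\sup\Big\{p>0:\ \mathbb{E}\big[U_S((\textstyle\sum_{i=1}^{n-1}Y_i+p)\Delta)\big]\le \mathbb{E}\big[U_S((\sum_{i=1}^nY_i)\Delta)\big]\Big\},$$ and for $t\in\{1,\dots,n-1\}$, $$p_t^*(\Delta)=p_{t+1}^*(\Delta)+\sup\Big\{p>0:\ \mathbb{E}\big[U_S((\textstyle\sum_{i=1}^{t-1}Y_i+p+p^*_{t+1})\Delta)\big]\le \mathbb{E}\big[U_S((\sum_{i=1}^{t}Y_i+p^*_{t+1})\Delta)\big]\Big\}.$$ If the liquidity provider presents the menu $\{p_i^*(\Delta)\}_{i=1}^n$, the trader obtains the same expected utility for each of his $n+1$ actions. Moreover, $\{p_i^*(\Delta)\}_{i=1}^n$ is the unique indifference menu.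
   Context: An indifference menu is a menu of prices $(p_1,\dots,p_n)$ under which $\tilde U^1_S=\tilde U^2_S=\dots=\tilde U^{n+1}_S$. Expectations are over the joint distribution of $Y_1,\dots,Y_n$. *)

theory Defs
  imports "HOL-Probability.Probability"
begin

definition EU_sell :: "'a measure \<Rightarrow> (real \<Rightarrow> real) \<Rightarrow> (nat \<Rightarrow> 'a \<Rightarrow> real) \<Rightarrow> real \<Rightarrow> nat \<Rightarrow> real \<Rightarrow> real"
  where "EU_sell M U Y \<Delta> t p = (LINT \<omega>|M. U (((\<Sum>i\<in>{1..<t}. Y i \<omega>) + p) * \<Delta>))"

definition EU_hold :: "'a measure \<Rightarrow> (real \<Rightarrow> real) \<Rightarrow> (nat \<Rightarrow> 'a \<Rightarrow> real) \<Rightarrow> real \<Rightarrow> nat \<Rightarrow> real"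
  where "EU_hold M U Y \<Delta> n = (LINT \<omega>|M. U ((\<Sum>i\<in>{1..n}. Y i \<omega>) * \<Delta>))"

definition tildeU :: "'a measure \<Rightarrow> (real \<Rightarrow> real) \<Rightarrow> (nat \<Rightarrow> 'a \<Rightarrow> real) \<Rightarrow> real \<Rightarrow> nat \<Rightarrow> (nat \<Rightarrow> real) \<Rightarrow> nat \<Rightarrow> real"
  where "tildeU M U Y \<Delta> n p t = (if t \<le> n then EU_sell M U Y \<Delta> t (p t) else EU_hold M U Y \<Delta> n)"

definition indifference_menu :: "'a measure \<Rightarrow> (real \<Rightarrow> real) \<Rightarrow> (nat \<Rightarrow> 'a \<Rightarrow> real) \<Rightarrow> real \<Rightarrow> nat \<Rightarrow> (nat \<Rightarrow> real) \<Rightarrow> bool"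
  where "indifference_menu M U Y \<Delta> n p \<longleftrightarrow>
    (\<forall>s\<in>{1..n+1}. \<forall>t\<in>{1..n+1}. tildeU M U Y \<Delta> n p s = tildeU M U Y \<Delta> n p t)"

text \<open>pstar_aux ... n k = p^*_(n-k)(Delta), computed by backward recursion.\<close>
fun pstar_aux :: "'a measure \<Rightarrow> (real \<Rightarrow> real) \<Rightarrow> (nat \<Rightarrow> 'a \<Rightarrow> real) \<Rightarrow> real \<Rightarrow> nat \<Rightarrow> nat \<Rightarrow> real" where
  "pstar_aux M U Y \<Delta> n 0 =
     Sup {p. p > 0 \<and>
       (LINT \<omega>|M. U (((\<Sum>i\<in>{1..<n}. Y i \<omega>) + p) * \<Delta>))
         \<le> (LINT \<omega>|M. U ((\<Sum>i\<in>{1..n}. Y i \<omega>) * \<Delta>))}"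
| "pstar_aux M U Y \<Delta> n (Suc k) =
     (let t = n - Suc k; q = pstar_aux M U Y \<Delta> n k in
       q + Sup {p. p > 0 \<and>
         (LINT \<omega>|M. U (((\<Sum>i\<in>{1..<t}. Y i \<omega>) + p + q) * \<Delta>))
           \<le> (LINT \<omega>|M. U (((\<Sum>i\<in>{1..t}. Y i \<omega>) + q) * \<Delta>))})"

definition pstar :: "'a measure \<Rightarrow> (real \<Rightarrow> real) \<Rightarrow> (nat \<Rightarrow> 'a \<Rightarrow> real) \<Rightarrow> real \<Rightarrow> nat \<Rightarrow> nat \<Rightarrow> real"
  where "pstar M U Y \<Delta> n t = pstar_aux M U Y \<Delta> n (n - t)"

end

theory Submission
  imports Defs
begin

(*
  Let S_t = Y_1 + ... + Y_(t-1). For a nonnegative integrable X, the map x \<mapsto> E[U((X + x) Delta)] is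
  strictly increasing and concave, hence continuous. Adding the payment Y_t \<ge> 0, which is positive
  with positive probability, raises E[U((S_t + q) Delta)] strictly, but by less than adding a large
  enough constant does (monotone convergence). By the intermediate value theorem the set defining the
  increment p^*_t - p^*_(t+1) is an interval (0, s] whose supremum s makes selling at q + s before Y_t
  exactly as good as receiving Y_t and then selling at q. Backward induction from t = n, with
  q = p^*_(t+1), shows that every sale at p^*_t is as good as never selling; strict monotonicity in the
  price gives uniqueness.
*)

lemma concave_on_le_secant_line:
  fixes f :: "real \<Rightarrow> real"
  assumes "concave_on UNIV f" "a < b" "b \<le> v"
  shows "f v \<le> f b + (f b - f a) / (b - a) * (v - b)"
proof (cases "b = v")
  case False
  define s where "s = (f b - f a) / (b - a)"
  have "convex_on UNIV (\<lambda>x. - f x)"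
    using assms(1) by (simp add: concave_on_def)
  from convex_on_slope_le(1)[OF this _ _ \<open>a < b\<close>, of v] False assms(3)
  have "(f b - f a) / (a - b) \<le> (f v - f a) / (a - v)"
    by simp
  then have "(f v - f a) / (v - a) \<le> s"
    unfolding s_def by (metis minus_diff_eq divide_minus_right neg_le_iff_le)
  then have "f v - f a \<le> s * (v - a)"
    using assms(2,3) by (simp add: pos_divide_le_eq mult.commute)
  moreover have "s * (b - a) = f b - f a"
    using assms(2) by (simp add: s_def)
  ultimately show ?thesis
    unfolding s_def[symmetric] by (simp add: algebra_simps)
qed simp

lemma (in prob_space) ex_integral_pos_of_mono:
  fixes f :: "nat \<Rightarrow> 'a \<Rightarrow> real"
  assumes f: "\<And>k. integrable M (f k)"
    and mono: "\<And>\<omega>. \<omega> \<in> space M \<Longrightarrow> mono (\<lambda>k. f k \<omega>)"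
    and pos: "\<And>\<omega>. \<omega> \<in> space M \<Longrightarrow> \<exists>k. 0 < f k \<omega>"
  shows "\<exists>k. 0 < integral\<^sup>L M (f k)"
proof (rule ccontr)
  assume "\<nexists>k. 0 < integral\<^sup>L M (f k)"
  then have nonpos: "integral\<^sup>L M (f k) \<le> 0" for k
    by (simp add: not_less)
  \<comment> \<open>Capping at 1 keeps the pointwise limit finite, so that monotone convergence applies.\<close>
  define g where "g k \<omega> = min (f k \<omega>) 1" for k \<omega>
  define u where "u \<omega> = (SUP k. g k \<omega>)" for \<omega>
  have int_g: "integrable M (g k)" for k
    unfolding g_def using f by simp
  have mono_g: "mono (\<lambda>k. g k \<omega>)" if "\<omega> \<in> space M" for \<omega>
    using mono[OF that] unfolding g_def mono_def by (simp add: min.coboundedI1)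
  have lim_g: "(\<lambda>k. g k \<omega>) \<longlonglongrightarrow> u \<omega>" if "\<omega> \<in> space M" for \<omega>
    unfolding u_def using mono_g[OF that]
    by (intro LIMSEQ_incseq_SUP bdd_aboveI[of _ 1]) (auto simp: g_def)
  have "incseq (\<lambda>k. integral\<^sup>L M (g k))"
    using int_g mono_g by (auto simp: incseq_def mono_def intro!: integral_mono)
  moreover have g_nonpos: "integral\<^sup>L M (g k) \<le> 0" for k
    using integral_mono[OF int_g f, of k k] nonpos[of k] by (simp add: g_def)
  then have "bdd_above (range (\<lambda>k. integral\<^sup>L M (g k)))"
    by (intro bdd_aboveI2)
  ultimately have lim_int: "(\<lambda>k. integral\<^sup>L M (g k)) \<longlonglongrightarrow> (SUP k. integral\<^sup>L M (g k))"
    by (intro LIMSEQ_incseq_SUP)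
  have SUP_nonpos: "(SUP k. integral\<^sup>L M (g k)) \<le> 0"
    using g_nonpos by (intro cSUP_least) auto
  have meas_u: "u \<in> borel_measurable M"
    using lim_g borel_measurable_integrable[OF int_g] by (rule borel_measurable_LIMSEQ_real)
  have AE_mono: "AE \<omega> in M. mono (\<lambda>k. g k \<omega>)" and AE_lim: "AE \<omega> in M. (\<lambda>k. g k \<omega>) \<longlonglongrightarrow> u \<omega>"
    using mono_g lim_g by (auto intro: AE_I2)
  note monotone_convergence = int_g AE_mono AE_lim lim_int meas_u
  have int_u: "integrable M u"
    by (rule integrable_monotone_convergence[OF monotone_convergence])
  have "integral\<^sup>L M u = (SUP k. integral\<^sup>L M (g k))"
    by (rule integral_monotone_convergence[OF monotone_convergence])
  with SUP_nonpos have "integral\<^sup>L M u \<le> 0"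
    by simp
  moreover have "0 < u \<omega>" if \<omega>: "\<omega> \<in> space M" for \<omega>
  proof -
    obtain k where "0 < f k \<omega>"
      using pos[OF \<omega>] by blast
    then have "0 < g k \<omega>"
      by (simp add: g_def)
    also have "g k \<omega> \<le> u \<omega>"
      using lim_g[OF \<omega>] mono_g[OF \<omega>] by (intro incseq_le) (auto simp: incseq_def mono_def)
    finally show ?thesis .
  qed
  then have "integral\<^sup>L M (\<lambda>_. 0) < integral\<^sup>L M u"
    using int_u by (intro integral_less_AE_space) (auto intro: AE_I2 simp: emeasure_space_1)
  ultimately show False
    by simp
qed

lemma concave_on_continuous:
  fixes f :: "'a::euclidean_space \<Rightarrow> real"
  assumes "open S" "concave_on S f"
  shows "continuous_on S f"
proof -
  have "continuous_on S (\<lambda>x. - f x)"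
    using assms by (intro convex_on_continuous) (simp_all add: concave_on_def)
  from continuous_on_minus[OF this] show ?thesis
    by simp
qed

lemma concave_on_scaled_arg:
  fixes f :: "real \<Rightarrow> real"
  assumes "concave_on UNIV f"
  shows "concave_on UNIV (\<lambda>x. f (x * c))"
  unfolding concave_on_iff
proof (intro conjI ballI allI impI)
  fix x y u v :: real
  assume "0 \<le> u" "0 \<le> v" "u + v = 1"
  then have "u = 1 - v" "v \<le> 1"
    by auto
  then have "u * f (x * c) + v * f (y * c) \<le> f (u *\<^sub>R (x * c) + v *\<^sub>R (y * c))"
    using concave_onD[OF assms, of v "x * c" "y * c"] \<open>0 \<le> v\<close> by simp
  also have "u *\<^sub>R (x * c) + v *\<^sub>R (y * c) = (u *\<^sub>R x + v *\<^sub>R y) * c"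
    by (simp add: distrib_right)
  finally show "u * f (x * c) + v * f (y * c) \<le> f ((u *\<^sub>R x + v *\<^sub>R y) * c)" .
qed simp

lemma strict_mono_Sup_sublevel_eq:
  fixes H :: "real \<Rightarrow> real"
  assumes mono: "strict_mono H" and cont: "continuous_on UNIV H"
    and below: "H 0 < r" and above: "r < H b"
  shows "H (Sup {p. 0 < p \<and> H p \<le> r}) = r"
proof -
  have "0 < b"
    using below above mono by (metis less_trans strict_mono_less)
  with below above obtain s where s: "0 \<le> s" "H s = r"
    using IVT'[of H 0 r b] continuous_on_subset[OF cont] by fastforce
  with below have "0 < s"
    by (cases "s = 0") auto
  have "{p. 0 < p \<and> H p \<le> r} = {0<..s}"
    using s strict_mono_less_eq[OF mono] by auto
  with \<open>0 < s\<close> s show ?thesis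
    by simp
qed

locale concave_utility = prob_space M for M :: "'a measure" +
  fixes U :: "real \<Rightarrow> real"
  assumes concave_U: "concave_on UNIV U" and strict_mono_U: "strict_mono U"
begin

lemma mono_U: "mono U"
  using strict_mono_U by (rule strict_mono_mono)

lemma borel_measurable_U [measurable]: "U \<in> borel_measurable borel"
  using mono_U by (rule borel_measurable_mono)

lemma integrable_U_comp:
  assumes V: "integrable M V" and lower: "AE \<omega> in M. c \<le> V \<omega>"
  shows "integrable M (\<lambda>\<omega>. U (V \<omega>))"
proof (rule Bochner_Integration.integrable_bound)
  define m where "m = U c - U (c - 1)"
  have "0 < m"
    using strict_mono_U by (simp add: m_def strict_mono_less)
  have [measurable]: "V \<in> borel_measurable M"
    using V by (rule borel_measurable_integrable)
  show "(\<lambda>\<omega>. U (V \<omega>)) \<in> borel_measurable M"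
    by measurable
  show "integrable M (\<lambda>\<omega>. \<bar>U c\<bar> + m * (\<bar>V \<omega>\<bar> + \<bar>c\<bar>))"
    using V by (intro Bochner_Integration.integrable_add integrable_const integrable_mult_right integrable_abs)
  show "AE \<omega> in M. norm (U (V \<omega>)) \<le> norm (\<bar>U c\<bar> + m * (\<bar>V \<omega>\<bar> + \<bar>c\<bar>))"
    using lower
  proof eventually_elim
    case (elim \<omega>)
    define B where "B = m * (\<bar>V \<omega>\<bar> + \<bar>c\<bar>)"
    have "U c \<le> U (V \<omega>)"
      using mono_U elim by (rule monoD)
    moreover have "U (V \<omega>) \<le> U c + m * (V \<omega> - c)"
      using concave_on_le_secant_line[OF concave_U, of "c - 1" c "V \<omega>"] elim by (simp add: m_def)
    moreover have "m * (V \<omega> - c) \<le> B"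
      unfolding B_def using \<open>0 < m\<close> by (intro mult_left_mono) auto
    moreover have "0 \<le> B"
      unfolding B_def using \<open>0 < m\<close> by simp
    ultimately show ?case
      unfolding B_def[symmetric] real_norm_def by linarith
  qed
qed

context
  fixes X :: "'a \<Rightarrow> real"
  assumes integrable_X: "integrable M X" and X_nonneg: "AE \<omega> in M. 0 \<le> X \<omega>"
begin

lemma integrable_U_shift: "integrable M (\<lambda>\<omega>. U (X \<omega> + x))"
  using integrable_X X_nonneg by (intro integrable_U_comp[where c = x]) auto

lemma integrable_U_shift_add:
  assumes "integrable M Z" "AE \<omega> in M. 0 \<le> Z \<omega>"
  shows "integrable M (\<lambda>\<omega>. U (X \<omega> + Z \<omega> + x))"
  using assms integrable_X X_nonneg by (intro integrable_U_comp[where c = x]) auto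

lemma strict_mono_integral_U_shift: "strict_mono (\<lambda>x. \<integral>\<omega>. U (X \<omega> + x) \<partial>M)"
proof (rule strict_monoI)
  fix x y :: real
  assume "x < y"
  then show "(\<integral>\<omega>. U (X \<omega> + x) \<partial>M) < (\<integral>\<omega>. U (X \<omega> + y) \<partial>M)"
    using strict_mono_U
    by (intro integral_less_AE_space integrable_U_shift AE_I2) (auto simp: strict_mono_less emeasure_space_1)
qed

lemma concave_integral_U_shift: "concave_on UNIV (\<lambda>x. \<integral>\<omega>. U (X \<omega> + x) \<partial>M)"
  unfolding concave_on_iff
proof (intro conjI ballI allI impI)
  fix x y u v :: real
  assume uv: "0 \<le> u" "0 \<le> v" "u + v = 1"
  have "u * U (X \<omega> + x) + v * U (X \<omega> + y) \<le> U (X \<omega> + (u *\<^sub>R x + v *\<^sub>R y))" for \<omega>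
  proof -
    have "u * U (X \<omega> + x) + v * U (X \<omega> + y) \<le> U (u *\<^sub>R (X \<omega> + x) + v *\<^sub>R (X \<omega> + y))"
      using concave_U uv unfolding concave_on_iff by blast
    also have "u *\<^sub>R (X \<omega> + x) + v *\<^sub>R (X \<omega> + y) = X \<omega> + (u *\<^sub>R x + v *\<^sub>R y)"
      using uv by (simp add: algebra_simps flip: distrib_right)
    finally show ?thesis .
  qed
  then have "(\<integral>\<omega>. u * U (X \<omega> + x) + v * U (X \<omega> + y) \<partial>M) \<le> (\<integral>\<omega>. U (X \<omega> + (u *\<^sub>R x + v *\<^sub>R y)) \<partial>M)"
    by (intro integral_mono integrable_U_shift Bochner_Integration.integrable_add integrable_mult_right)
  then show "u * (\<integral>\<omega>. U (X \<omega> + x) \<partial>M) + v * (\<integral>\<omega>. U (X \<omega> + y) \<partial>M)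
      \<le> (\<integral>\<omega>. U (X \<omega> + (u *\<^sub>R x + v *\<^sub>R y)) \<partial>M)"
    using integrable_U_shift by simp
qed simp

lemma continuous_integral_U_shift: "continuous_on UNIV (\<lambda>x. \<integral>\<omega>. U (X \<omega> + x) \<partial>M)"
  using concave_integral_U_shift by (intro concave_on_continuous) auto

lemma integral_U_shift_less_add:
  assumes Z: "integrable M Z" "AE \<omega> in M. 0 \<le> Z \<omega>"
    and Z_pos: "0 < measure M {\<omega> \<in> space M. 0 < Z \<omega>}"
  shows "(\<integral>\<omega>. U (X \<omega> + x) \<partial>M) < (\<integral>\<omega>. U (X \<omega> + Z \<omega> + x) \<partial>M)"
proof (rule integral_less_AE)
  have [measurable]: "Z \<in> borel_measurable M"
    using Z(1) by (rule borel_measurable_integrable)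
  show "{\<omega> \<in> space M. 0 < Z \<omega>} \<in> sets M"
    by measurable
  show "emeasure M {\<omega> \<in> space M. 0 < Z \<omega>} \<noteq> 0"
    using Z_pos by (simp add: emeasure_eq_measure)
  show "AE \<omega> in M. \<omega> \<in> {\<omega> \<in> space M. 0 < Z \<omega>} \<longrightarrow> U (X \<omega> + x) \<noteq> U (X \<omega> + Z \<omega> + x)"
    using strict_mono_U by (auto intro!: AE_I2 simp: strict_mono_eq)
  show "AE \<omega> in M. U (X \<omega> + x) \<le> U (X \<omega> + Z \<omega> + x)"
    using Z(2) by eventually_elim (simp add: monoD[OF mono_U])
qed (use integrable_U_shift integrable_U_shift_add Z in auto)

lemma ex_integral_U_shift_greater:
  assumes Z: "integrable M Z" "AE \<omega> in M. 0 \<le> Z \<omega>"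
  shows "\<exists>k. (\<integral>\<omega>. U (X \<omega> + Z \<omega> + x) \<partial>M) < (\<integral>\<omega>. U (X \<omega> + k + x) \<partial>M)"
proof -
  define f where "f k \<omega> = U (X \<omega> + real k + x) - U (X \<omega> + Z \<omega> + x)" for k \<omega>
  have "\<exists>k. 0 < integral\<^sup>L M (f k)"
  proof (rule ex_integral_pos_of_mono)
    show "integrable M (f k)" for k
      unfolding f_def using integrable_U_shift[of "real k + x"] integrable_U_shift_add[OF Z]
      by (simp add: add.assoc)
    show "mono (\<lambda>k. f k \<omega>)" for \<omega>
      unfolding f_def by (intro monoI diff_right_mono monoD[OF mono_U]) simp
    show "\<exists>k. 0 < f k \<omega>" for \<omega>
    proof -
      obtain k :: nat where "Z \<omega> < real k"
        using reals_Archimedean2 by blast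
      then show ?thesis
        unfolding f_def using strict_mono_U by (auto simp: strict_mono_less)
    qed
  qed
  then obtain k where "0 < integral\<^sup>L M (f k)"
    by blast
  moreover have "integral\<^sup>L M (f k) = (\<integral>\<omega>. U (X \<omega> + real k + x) \<partial>M) - (\<integral>\<omega>. U (X \<omega> + Z \<omega> + x) \<partial>M)"
    unfolding f_def using integrable_U_shift[of "real k + x"] integrable_U_shift_add[OF Z]
    by (simp add: add.assoc)
  ultimately show ?thesis
    by auto
qed

lemma integral_U_Sup_indifference:
  fixes q :: real
  assumes Z: "integrable M Z" "AE \<omega> in M. 0 \<le> Z \<omega>"
    and Z_pos: "0 < measure M {\<omega> \<in> space M. 0 < Z \<omega>}"
  defines "R \<equiv> \<integral>\<omega>. U (X \<omega> + Z \<omega> + q) \<partial>M"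
  shows "(\<integral>\<omega>. U (X \<omega> + Sup {p. 0 < p \<and> (\<integral>\<omega>. U (X \<omega> + p + q) \<partial>M) \<le> R} + q) \<partial>M) = R"
proof -
  define G where "G x = (\<integral>\<omega>. U (X \<omega> + x) \<partial>M)" for x
  have G_shift: "(\<integral>\<omega>. U (X \<omega> + p + q) \<partial>M) = G (p + q)" for p
    by (simp add: G_def add.assoc)
  have "G (0 + q) < R"
    using integral_U_shift_less_add[OF Z Z_pos] by (simp add: G_def R_def)
  moreover obtain k where "R < G (k + q)"
    using ex_integral_U_shift_greater[OF Z, of q] unfolding R_def G_shift by blast
  moreover have "strict_mono (\<lambda>p. G (p + q))"
    using strict_mono_integral_U_shift by (auto simp: G_def strict_mono_def)
  moreover have "continuous_on UNIV (\<lambda>p. G (p + q))"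
    using continuous_integral_U_shift unfolding G_def[abs_def]
    by (rule continuous_on_compose2) (auto intro: continuous_intros)
  ultimately have "G (Sup {p. 0 < p \<and> G (p + q) \<le> R} + q) = R"
    using strict_mono_Sup_sublevel_eq[of "\<lambda>p. G (p + q)"] by blast
  then show ?thesis
    unfolding G_shift .
qed

end

end

lemma indifference_menu_iff:
  "indifference_menu M U Y \<Delta> n p \<longleftrightarrow> (\<forall>t\<in>{1..n}. EU_sell M U Y \<Delta> t (p t) = EU_hold M U Y \<Delta> n)"
proof
  assume "indifference_menu M U Y \<Delta> n p"
  then have "tildeU M U Y \<Delta> n p t = tildeU M U Y \<Delta> n p (n + 1)" if "t \<in> {1..n}" for t
    using that unfolding indifference_menu_def by auto
  then show "\<forall>t\<in>{1..n}. EU_sell M U Y \<Delta> t (p t) = EU_hold M U Y \<Delta> n"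
    by (auto simp: tildeU_def)
next
  assume "\<forall>t\<in>{1..n}. EU_sell M U Y \<Delta> t (p t) = EU_hold M U Y \<Delta> n"
  then have "tildeU M U Y \<Delta> n p t = EU_hold M U Y \<Delta> n" if "t \<in> {1..n+1}" for t
    using that by (auto simp: tildeU_def)
  then show "indifference_menu M U Y \<Delta> n p"
    unfolding indifference_menu_def by simp
qed

locale yield_token_holder = prob_space M for M :: "'a measure" +
  fixes U :: "real \<Rightarrow> real" and Y :: "nat \<Rightarrow> 'a \<Rightarrow> real" and \<Delta> :: real and n :: nat
  assumes concave_U: "concave_on UNIV U" and strict_mono_U: "strict_mono U" and \<Delta>_pos: "0 < \<Delta>"
    and integrable_Y: "\<And>i. i \<in> {1..n} \<Longrightarrow> integrable M (Y i)"
    and Y_nonneg: "\<And>i. i \<in> {1..n} \<Longrightarrow> AE \<omega> in M. 0 \<le> Y i \<omega>"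
    and Y_pos: "\<And>i. i \<in> {1..n} \<Longrightarrow> 0 < measure M {\<omega> \<in> space M. 0 < Y i \<omega>}"
begin

sublocale scaled: concave_utility M "\<lambda>y. U (y * \<Delta>)"
proof
  show "concave_on UNIV (\<lambda>y. U (y * \<Delta>))"
    using concave_U by (rule concave_on_scaled_arg)
  show "strict_mono (\<lambda>y. U (y * \<Delta>))"
    using strict_mono_U \<Delta>_pos by (auto intro!: strict_monoI simp: strict_mono_less)
qed

lemma integrable_partial_sum: "t \<le> n + 1 \<Longrightarrow> integrable M (\<lambda>\<omega>. \<Sum>i\<in>{1..<t}. Y i \<omega>)"
  using integrable_Y by (intro Bochner_Integration.integrable_sum) auto

lemma AE_partial_sum_nonneg: "t \<le> n + 1 \<Longrightarrow> AE \<omega> in M. 0 \<le> (\<Sum>i\<in>{1..<t}. Y i \<omega>)"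
proof -
  assume "t \<le> n + 1"
  then have "AE \<omega> in M. \<forall>i\<in>{1..<t}. 0 \<le> Y i \<omega>"
    using Y_nonneg by (intro AE_finite_allI) auto
  then show ?thesis
    by eventually_elim (auto intro: sum_nonneg)
qed

lemma strict_mono_EU_sell: "t \<le> n + 1 \<Longrightarrow> strict_mono (EU_sell M U Y \<Delta> t)"
  using scaled.strict_mono_integral_U_shift[OF integrable_partial_sum AE_partial_sum_nonneg]
  by (simp add: EU_sell_def[abs_def])

lemma EU_sell_Sup_indifference:
  fixes q :: real
  assumes t: "t \<in> {1..n}"
  defines "R \<equiv> \<integral>\<omega>. U (((\<Sum>i\<in>{1..t}. Y i \<omega>) + q) * \<Delta>) \<partial>M"
  shows "EU_sell M U Y \<Delta> t (Sup {p. 0 < p \<and> (\<integral>\<omega>. U (((\<Sum>i\<in>{1..<t}. Y i \<omega>) + p + q) * \<Delta>) \<partial>M) \<le> R} + q) = R"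
proof -
  have sum_Suc: "(\<Sum>i\<in>{1..<t}. Y i \<omega>) + Y t \<omega> = (\<Sum>i\<in>{1..t}. Y i \<omega>)" for \<omega>
    using t by (simp add: sum.atLeastLessThan_Suc atLeastLessThanSuc_atLeastAtMost[symmetric])
  have "t \<le> n + 1"
    using t by simp
  from scaled.integral_U_Sup_indifference[OF integrable_partial_sum[OF this] AE_partial_sum_nonneg[OF this]
        integrable_Y[OF t] Y_nonneg[OF t] Y_pos[OF t], of q, unfolded sum_Suc]
  show ?thesis
    unfolding EU_sell_def R_def by (simp only: add.assoc)
qed

lemma EU_sell_pstar_aux: "k < n \<Longrightarrow> EU_sell M U Y \<Delta> (n - k) (pstar_aux M U Y \<Delta> n k) = EU_hold M U Y \<Delta> n"
proof (induction k)
  case 0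
  then show ?case
    using EU_sell_Sup_indifference[of n 0] by (simp add: EU_hold_def)
next
  case (Suc k)
  define t where "t = n - Suc k"
  define q where "q = pstar_aux M U Y \<Delta> n k"
  have t: "t \<in> {1..n}" "n - k = Suc t"
    using Suc.prems by (auto simp: t_def)
  have "EU_sell M U Y \<Delta> t (pstar_aux M U Y \<Delta> n (Suc k)) = EU_sell M U Y \<Delta> (Suc t) q"
    using EU_sell_Sup_indifference[OF t(1), of q]
    by (simp add: Let_def t_def[symmetric] q_def[symmetric] add.commute EU_sell_def atLeastLessThanSuc_atLeastAtMost)
  also have "\<dots> = EU_hold M U Y \<Delta> n"
    using Suc t by (simp add: q_def)
  finally show ?case
    by (simp add: t_def)
qed

lemma EU_sell_pstar: "t \<in> {1..n} \<Longrightarrow> EU_sell M U Y \<Delta> t (pstar M U Y \<Delta> n t) = EU_hold M U Y \<Delta> n"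
  using EU_sell_pstar_aux[of "n - t"] by (simp add: pstar_def)

end

theorem lemma19:
  fixes M :: "'a measure" and U :: "real \<Rightarrow> real" and Y :: "nat \<Rightarrow> 'a \<Rightarrow> real"
    and \<Delta> :: real and n :: nat
  assumes "prob_space M"
    and "n \<ge> 1"
    and "concave_on UNIV U"
    and "strict_mono U"
    and "\<Delta> > 0"
    and "\<forall>i\<in>{1..n}. integrable M (Y i)"
    and "\<forall>i\<in>{1..n}. AE \<omega> in M. Y i \<omega> \<ge> 0"
    and "\<forall>i\<in>{1..n}. measure M {\<omega>\<in>space M. Y i \<omega> > 0} > 0"
  shows "indifference_menu M U Y \<Delta> n (pstar M U Y \<Delta> n)
    \<and> (\<forall>p. indifference_menu M U Y \<Delta> n p \<longrightarrow> (\<forall>t\<in>{1..n}. p t = pstar M U Y \<Delta> n t))"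
proof -
  interpret yield_token_holder M U Y \<Delta> n
    using assms by (intro yield_token_holder.intro yield_token_holder_axioms.intro) simp_all
  have "indifference_menu M U Y \<Delta> n (pstar M U Y \<Delta> n)"
    by (simp add: indifference_menu_iff EU_sell_pstar)
  moreover have "p t = pstar M U Y \<Delta> n t" if "indifference_menu M U Y \<Delta> n p" "t \<in> {1..n}" for p t
  proof -
    have "EU_sell M U Y \<Delta> t (p t) = EU_sell M U Y \<Delta> t (pstar M U Y \<Delta> n t)"
      using that by (simp add: indifference_menu_iff EU_sell_pstar)
    moreover have "strict_mono (EU_sell M U Y \<Delta> t)"
      using that(2) by (intro strict_mono_EU_sell) simp
    ultimately show ?thesis
      by (simp add: strict_mono_eq)
  qed
  ultimately show ?thesis
    by blast
qed

end
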